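(* Let $\{w^k\}$ be generated by Algorithm 2 (running infinitely) and suppose $\varepsilon^k\to0$. Then each accumulation point $\bar w$ of $\{w^k\}$ that is feasible for (P) and AM-regular is an M-stationary point of (P), i.e., there is $\lambda\in\mathbb Y$ with $0\in\nabla f(\bar w)+G'(\bar w)^*\lambda+\mathcal N^{\lim}_D(\bar w)$ and $\lambda\in\mathcal N_C(G(\bar w))$.
   Context: Standing setting: $\mathbb W,\mathbb Y$ Euclidean spaces; (P) is $\min f(w)$ s.t. $G(w)\in C$, $w\in D$, with $f\colon\mathbb W\to\mathbb R$, $G\colon\mathbb W\to\mathbb Y$ continuously differentiable, $C\subset\mathbb Y$ nonempty closed convex, $D\subset\mathbb W$ nonempty closed. $P_C$ is the Euclidean projection onto $C$, $d_C(y)=\|y-P_C(y)\|$, $\mathcal N_C$ the convex normal cone ($\varnothing$ outside $C$); $\mathcal N^{\lim}_D(\bar w):=\limsup_{w\to\bar w}\operatorname{cone}(w-\Pi_D(w))$ for $\bar w\in D$ ($\Pi_D$ multivalued projection, outer set limit), $\varnothing$ for $\bar w\notin D$. A feasible $\bar w$ is AM-regular if $\limsup_{w\to\bar w,\,z\to0}\mathcal M(w,z)\subset\mathcal M(\bar w,0)$ with $\mathcal M(w,z):=G'(w)^*\mathcal N_C(G(w)-z)+\mathcal N^{\lim}_D(w)$. Augmented Lagrangian $\mathcal L_\rho(w,\lambda):=f(w)+\frac\rho2 d_C^2(G(w)+\lambda/\rho)$; $V_\rho(w,u):=\|G(w)-P_C(G(w)+u/\rho)\|$. Algorithm 2: data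 $\rho_0>0$, $\beta>1$, $\eta\in(0,1)$, $w^0\in D$, a nonempty bounded set $U\subset\mathbb Y$. For $k=0,1,\dots$: choose $u^k\in U$; compute $w^{k+1}$ and $\varepsilon^{k+1}\in\mathbb W$ with $\varepsilon^{k+1}\in\nabla_w\mathcal L_{\rho_k}(w^{k+1},u^k)+\mathcal N^{\lim}_D(w^{k+1})$; set $\lambda^{k+1}:=\rho_k[G(w^{k+1})+u^k/\rho_k-P_C(G(w^{k+1})+u^k/\rho_k)]$; if $k=0$ or $V_{\rho_k}(w^{k+1},u^k)\le\eta V_{\rho_{k-1}}(w^k,u^{k-1})$ set $\rho_{k+1}:=\rho_k$, else $\rho_{k+1}:=\beta\rho_k$. *)

theory Defs
  imports "HOL-Analysis.Analysis"
begin

definition normal_cone_cvx :: "'a::real_inner set \<Rightarrow> 'a \<Rightarrow> 'a set" where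
  "normal_cone_cvx C y = (if y \<in> C then {v. \<forall>c\<in>C. inner v (c - y) \<le> 0} else {})"

definition proj_set :: "'a::real_inner set \<Rightarrow> 'a \<Rightarrow> 'a set" where
  "proj_set D w = {p \<in> D. dist w p = infdist w D}"

definition prox_cone :: "'a::real_inner set \<Rightarrow> 'a \<Rightarrow> 'a set" where
  "prox_cone D w = {c *\<^sub>R (w - p) | c p. c \<ge> 0 \<and> p \<in> proj_set D w}"

definition lim_normal_cone :: "'a::real_inner set \<Rightarrow> 'a \<Rightarrow> 'a set" where
  "lim_normal_cone D wb = (if wb \<in> D then
     {v. \<exists>ws vs. ws \<longlonglongrightarrow> wb \<and> vs \<longlonglongrightarrow> v \<and> (\<forall>k. vs k \<in> prox_cone D (ws k))}
   else {})"

definition AM_map ::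
  "('w::euclidean_space \<Rightarrow> 'y::euclidean_space) \<Rightarrow> ('w \<Rightarrow> 'w \<Rightarrow>\<^sub>L 'y) \<Rightarrow> 'y set \<Rightarrow> 'w set
    \<Rightarrow> 'w \<Rightarrow> 'y \<Rightarrow> 'w set" where
  "AM_map G DG C D w z =
     {adjoint (blinfun_apply (DG w)) l + v | l v. l \<in> normal_cone_cvx C (G w - z) \<and> v \<in> lim_normal_cone D w}"

definition AM_regular ::
  "('w::euclidean_space \<Rightarrow> 'y::euclidean_space) \<Rightarrow> ('w \<Rightarrow> 'w \<Rightarrow>\<^sub>L 'y) \<Rightarrow> 'y set \<Rightarrow> 'w set
    \<Rightarrow> 'w \<Rightarrow> bool" where
  "AM_regular G DG C D wb \<longleftrightarrow>
     (\<forall>ws zs xs x. ws \<longlonglongrightarrow> wb \<and> zs \<longlonglongrightarrow> 0 \<and> xs \<longlonglongrightarrow> x \<and> (\<forall>k. xs k \<in> AM_map G DG C D (ws k) (zs k))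
        \<longrightarrow> x \<in> AM_map G DG C D wb 0)"

definition aug_lag ::
  "('w \<Rightarrow> real) \<Rightarrow> ('w \<Rightarrow> 'y::euclidean_space) \<Rightarrow> 'y set \<Rightarrow> real \<Rightarrow> 'w \<Rightarrow> 'y \<Rightarrow> real" where
  "aug_lag f G C \<rho> w l = f w + \<rho> / 2 * (infdist (G w + (1/\<rho>) *\<^sub>R l) C)\<^sup>2"

definition V_fun :: "('w \<Rightarrow> 'y::euclidean_space) \<Rightarrow> 'y set \<Rightarrow> real \<Rightarrow> 'w \<Rightarrow> 'y \<Rightarrow> real" where
  "V_fun G C \<rho> w u = norm (G w - closest_point C (G w + (1/\<rho>) *\<^sub>R u))"

end

theory Submission imports Defs begin

text \<open>
  The gradient of \<open>d\<^sub>C\<^sup>2/2\<close> at \<open>y\<close> is \<open>y - P\<^sub>C y\<close>, and \<open>\<rho> (y - P\<^sub>C y)\<close> is a normal to \<open>C\<close>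
  at \<open>P\<^sub>C y\<close>. Hence the inexact stationarity of the k-th subproblem says exactly that
  \<open>eps (k+1) - \<nabla>f (w (k+1))\<close> lies in \<open>M (w (k+1), z k)\<close>, where
  \<open>z k = G (w (k+1)) - P\<^sub>C (G (w (k+1)) + u k / \<rho> k)\<close>, whose norm is the quantity \<open>V\<close> watched by
  the penalty update. Either the update eventually always accepts, and then \<open>z k\<close> decays
  geometrically, or \<open>\<rho> k \<rightarrow> \<infinity>\<close>, and then along a subsequence with \<open>w (k+1) \<rightarrow> wb\<close> we get
  \<open>z k \<rightarrow> G wb - P\<^sub>C (G wb) = 0\<close> by feasibility. AM-regularity at \<open>wb\<close> now yields
  \<open>-\<nabla>f wb \<in> M (wb, 0)\<close>, which is M-stationarity.
\<close>

lemma infdist_square_first_order_bound: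
  fixes C :: "'y::euclidean_space set"
  assumes cv: "convex C" and cl: "closed C" and ne: "C \<noteq> {}"
  shows "\<bar>(infdist (y + h) C)\<^sup>2 - (infdist y C)\<^sup>2 - 2 * inner (y - closest_point C y) h\<bar> \<le> (norm h)\<^sup>2"
proof -
  define p where "p = closest_point C y"
  define q where "q = closest_point C (y + h)"
  have pC: "p \<in> C" and qC: "q \<in> C"
    unfolding p_def q_def using closest_point_in_set[OF cl ne] by auto
  have dist_p: "infdist y C = norm (y - p)" and dist_q: "infdist (y + h) C = norm (y + h - q)"
    unfolding p_def q_def using setdist_closest_point[OF cl ne]
    by (simp_all add: infdist_eq_setdist dist_norm)
  have "norm (y + h - q) \<le> norm (y + h - p)"
    using closest_point_le[OF cl pC, of "y + h"] by (simp add: q_def dist_norm)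
  then have upper: "(norm (y + h - q))\<^sup>2 \<le> (norm (y + h - p))\<^sup>2" by (simp add: power_mono)
  have "norm (y - p) \<le> norm (y - q)"
    using closest_point_le[OF cl qC, of y] by (simp add: p_def dist_norm)
  then have lower: "(norm (y - p))\<^sup>2 \<le> (norm (y - q))\<^sup>2" by (simp add: power_mono)
  have "norm (q - p) \<le> norm h"
    using closest_point_lipschitz[OF cv cl ne, of "y + h" y] by (simp add: p_def q_def dist_norm)
  then have qp: "\<bar>inner (q - p) h\<bar> \<le> (norm h)\<^sup>2"
    using Cauchy_Schwarz_ineq2[of "q - p" h]
    by (smt (verit) mult_right_mono norm_ge_zero power2_eq_square)
  have "(norm (y + h - p))\<^sup>2 = (norm (y - p))\<^sup>2 + 2 * inner (y - p) h + (norm h)\<^sup>2"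
    and "(norm (y - q))\<^sup>2 = (norm (y + h - q))\<^sup>2 - 2 * inner (y + h - q) h + (norm h)\<^sup>2"
    and "inner (y + h - q) h - inner (y - p) h = (norm h)\<^sup>2 - inner (q - p) h"
    by (simp_all add: power2_norm_eq_inner algebra_simps inner_commute)
  then show ?thesis
    unfolding dist_p dist_q p_def[symmetric] using upper lower qp by (simp add: abs_le_iff)
qed

lemma infdist_square_has_derivative:
  fixes C :: "'y::euclidean_space set"
  assumes "convex C" and "closed C" and "C \<noteq> {}"
  shows "((\<lambda>y. (infdist y C)\<^sup>2) has_derivative (\<lambda>h. 2 * inner (y - closest_point C y) h)) (at y)"
  unfolding has_derivative_at_alt
proof (intro conjI allI impI)
  show "bounded_linear (\<lambda>h. 2 * inner (y - closest_point C y) h)"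
    by (intro bounded_linear_const_mult bounded_linear_inner_right)
  fix e :: real assume "e > 0"
  show "\<exists>d>0. \<forall>x. norm (x - y) < d \<longrightarrow>
          norm ((infdist x C)\<^sup>2 - (infdist y C)\<^sup>2 - 2 * inner (y - closest_point C y) (x - y))
            \<le> e * norm (x - y)"
  proof (intro exI[of _ e] conjI allI impI \<open>e > 0\<close>)
    fix x assume "norm (x - y) < e"
    then have "(norm (x - y))\<^sup>2 \<le> e * norm (x - y)"
      by (simp add: power2_eq_square mult_right_mono)
    with infdist_square_first_order_bound[OF assms, of y "x - y"]
    show "norm ((infdist x C)\<^sup>2 - (infdist y C)\<^sup>2 - 2 * inner (y - closest_point C y) (x - y))
            \<le> e * norm (x - y)"
      by simp
  qed
qed

lemma aug_lag_has_derivative: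
  fixes f :: "'w::euclidean_space \<Rightarrow> real" and G :: "'w \<Rightarrow> 'y::euclidean_space"
    and \<rho> :: real and u :: 'y
  assumes f_deriv: "(f has_derivative (\<lambda>h. inner (Df x) h)) (at x)"
    and G_deriv: "(G has_derivative blinfun_apply (DG x)) (at x)"
    and "convex C" and "closed C" and "C \<noteq> {}"
  defines "y \<equiv> G x + (1 / \<rho>) *\<^sub>R u"
  shows "((\<lambda>x. aug_lag f G C \<rho> x u) has_derivative
           (\<lambda>h. inner (Df x + adjoint (blinfun_apply (DG x)) (\<rho> *\<^sub>R (y - closest_point C y))) h)) (at x)"
proof -
  have "((\<lambda>x. G x + (1 / \<rho>) *\<^sub>R u) has_derivative blinfun_apply (DG x)) (at x)"
    using G_deriv by (rule has_derivative_add_const)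
  from has_derivative_compose[OF this infdist_square_has_derivative[OF assms(3-5)]]
  have "((\<lambda>x. aug_lag f G C \<rho> x u) has_derivative
       (\<lambda>h. inner (Df x) h
              + \<rho> / 2 * (2 * inner (y - closest_point C y) (blinfun_apply (DG x) h)))) (at x)"
    unfolding aug_lag_def y_def by (intro has_derivative_add f_deriv has_derivative_mult_right)
  moreover have "linear (blinfun_apply (DG x))"
    by (simp add: bounded_linear.linear blinfun.bounded_linear_right)
  then have "inner h (adjoint (blinfun_apply (DG x)) v) = inner v (blinfun_apply (DG x) h)" for h v
    using adjoint_works by (metis inner_commute)
  ultimately show ?thesis
    by (simp add: inner_add_right inner_commute)
qed

lemma has_derivative_inner_unique:
  assumes "(f has_derivative (\<lambda>h. inner g h)) (at x)"
    and "(f has_derivative (\<lambda>h. inner g' h)) (at x)"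
  shows "g = g'"
  using has_derivative_unique[OF assms] by (metis vector_eq_rdot)

lemma scaled_projection_residual_normal:
  fixes C :: "'y::euclidean_space set"
  assumes "convex C" and "closed C" and "C \<noteq> {}" and "0 \<le> \<rho>"
  shows "\<rho> *\<^sub>R (y - closest_point C y) \<in> normal_cone_cvx C (closest_point C y)"
  using closest_point_dot[OF assms(1,2)] closest_point_in_set[OF assms(2,3)] \<open>0 \<le> \<rho>\<close>
  unfolding normal_cone_cvx_def by (simp add: mult_nonneg_nonpos)

lemma approx_stationary_in_AM_map:
  fixes f :: "'w::euclidean_space \<Rightarrow> real" and G :: "'w \<Rightarrow> 'y::euclidean_space"
  assumes f_deriv: "(f has_derivative (\<lambda>h. inner (Df x) h)) (at x)"
    and G_deriv: "(G has_derivative blinfun_apply (DG x)) (at x)"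
    and C: "convex C" "closed C" "C \<noteq> {}" and "0 < \<rho>"
    and grad: "((\<lambda>x. aug_lag f G C \<rho> x u) has_derivative (\<lambda>h. inner g h)) (at x)"
    and e: "e \<in> (\<lambda>v. g + v) ` lim_normal_cone D x"
  shows "e - Df x \<in> AM_map G DG C D x (G x - closest_point C (G x + (1 / \<rho>) *\<^sub>R u))"
proof -
  define y where "y = G x + (1 / \<rho>) *\<^sub>R u"
  define l where "l = \<rho> *\<^sub>R (y - closest_point C y)"
  have "g = Df x + adjoint (blinfun_apply (DG x)) l"
    using has_derivative_inner_unique[OF grad
        aug_lag_has_derivative[where Df=Df and DG=DG and x=x, OF f_deriv G_deriv C]]
    by (simp add: l_def y_def)
  moreover obtain v where "v \<in> lim_normal_cone D x" "e = g + v" using e by auto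
  moreover have "l \<in> normal_cone_cvx C (closest_point C y)"
    unfolding l_def using scaled_projection_residual_normal[OF C] \<open>0 < \<rho>\<close> by simp
  ultimately show ?thesis
    unfolding AM_map_def y_def[symmetric] by force
qed

lemma penalty_pos:
  fixes \<rho> :: "nat \<Rightarrow> real"
  assumes "\<rho> 0 > 0" and "\<beta> > 0" and "\<And>k. \<rho> (Suc k) = \<rho> k \<or> \<rho> (Suc k) = \<beta> * \<rho> k"
  shows "\<rho> k > 0"
proof (induction k)
  case (Suc k)
  then show ?case using assms(3)[of k] \<open>\<beta> > 0\<close> by (metis mult_pos_pos)
qed (use assms in simp)

lemma penalty_incseq:
  fixes \<rho> :: "nat \<Rightarrow> real"
  assumes "\<rho> 0 > 0" and "\<beta> \<ge> 1" and step: "\<And>k. \<rho> (Suc k) = \<rho> k \<or> \<rho> (Suc k) = \<beta> * \<rho> k"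
  shows "incseq \<rho>"
proof (rule incseq_SucI)
  fix k
  have "\<rho> k > 0" using penalty_pos[of \<rho> \<beta>] assms by simp
  then show "\<rho> k \<le> \<rho> (Suc k)" using step[of k] \<open>\<beta> \<ge> 1\<close> by auto
qed

lemma penalty_tendsto_at_top:
  fixes \<rho> :: "nat \<Rightarrow> real"
  assumes "\<rho> 0 > 0" and "\<beta> > 1" and step: "\<And>k. \<rho> (Suc k) = \<rho> k \<or> \<rho> (Suc k) = \<beta> * \<rho> k"
    and increased: "frequently (\<lambda>k. \<rho> (Suc k) = \<beta> * \<rho> k) sequentially"
  shows "filterlim \<rho> at_top sequentially"
proof -
  have inc: "incseq \<rho>" using penalty_incseq[of \<rho> \<beta>] assms by simp
  have "\<exists>K. \<forall>k\<ge>K. \<rho> 0 * \<beta> ^ n \<le> \<rho> k" for n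
  proof (induction n)
    case 0
    show ?case using inc by (auto simp: incseq_def)
  next
    case (Suc n)
    then obtain K where K: "\<And>k. k \<ge> K \<Longrightarrow> \<rho> 0 * \<beta> ^ n \<le> \<rho> k" by blast
    obtain k where "k \<ge> K" and k: "\<rho> (Suc k) = \<beta> * \<rho> k"
      using increased unfolding frequently_sequentially by blast
    then have "\<rho> 0 * \<beta> ^ Suc n \<le> \<rho> (Suc k)" using K \<open>\<beta> > 1\<close> by simp
    then have "\<rho> 0 * \<beta> ^ Suc n \<le> \<rho> j" if "j \<ge> Suc k" for j
      using incseqD[OF inc that] by linarith
    then show ?case by blast
  qed
  moreover have "\<exists>n. Z \<le> \<rho> 0 * \<beta> ^ n" for Z
  proof -
    obtain n where "Z / \<rho> 0 < \<beta> ^ n" using real_arch_pow[OF \<open>\<beta> > 1\<close>] by blast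
    then show ?thesis using \<open>\<rho> 0 > 0\<close> by (auto simp: field_simps intro: less_imp_le)
  qed
  ultimately show ?thesis
    unfolding filterlim_at_top eventually_sequentially by (meson order_trans)
qed

lemma geometric_decay_tendsto_zero:
  fixes a :: "nat \<Rightarrow> real"
  assumes nonneg: "\<And>k. 0 \<le> a k" and "0 \<le> \<eta>" and "\<eta> < 1"
    and decay: "eventually (\<lambda>k. a (Suc k) \<le> \<eta> * a k) sequentially"
  shows "a \<longlonglongrightarrow> 0"
proof -
  obtain N where N: "\<And>k. k \<ge> N \<Longrightarrow> a (Suc k) \<le> \<eta> * a k"
    using decay by (auto simp: eventually_sequentially)
  have bound: "norm (a (n + N)) \<le> \<eta> ^ n * a N" for n
  proof (induction n)
    case (Suc n)
    have "a (Suc n + N) \<le> \<eta> * a (n + N)" using N[of "n + N"] by simp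
    also have "\<dots> \<le> \<eta> ^ Suc n * a N"
      using mult_left_mono[OF Suc \<open>0 \<le> \<eta>\<close>] nonneg by (simp add: mult.assoc)
    finally show ?case using nonneg by simp
  qed (simp add: nonneg)
  have "(\<lambda>n. \<eta> ^ n * a N) \<longlonglongrightarrow> 0"
    using \<open>0 \<le> \<eta>\<close> \<open>\<eta> < 1\<close> by (intro tendsto_mult_left_zero LIMSEQ_power_zero) simp
  then have "(\<lambda>n. a (n + N)) \<longlonglongrightarrow> 0"
    by (rule Lim_null_comparison[rotated]) (use bound in \<open>simp add: always_eventually\<close>)
  then show ?thesis by (rule LIMSEQ_offset)
qed

lemma safeguarded_penalty_dichotomy:
  fixes a \<rho> :: "nat \<Rightarrow> real"
  assumes "\<rho> 0 > 0" and "\<beta> > 1" and "0 \<le> \<eta>" and "\<eta> < 1" and "\<And>k. 0 \<le> a k"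
    and update: "\<And>k. \<rho> (Suc k) = (if k = 0 \<or> a k \<le> \<eta> * a (k - 1) then \<rho> k else \<beta> * \<rho> k)"
  shows "a \<longlonglongrightarrow> 0 \<or> filterlim \<rho> at_top sequentially"
proof (cases "eventually (\<lambda>k. a (Suc k) \<le> \<eta> * a k) sequentially")
  case True
  then show ?thesis using geometric_decay_tendsto_zero assms(3-5) by blast
next
  case False
  then have "frequently (\<lambda>k. \<rho> (Suc (Suc k)) = \<beta> * \<rho> (Suc k)) sequentially"
    unfolding not_eventually by (rule frequently_elim1) (simp add: update[of "Suc k" for k])
  then have "frequently (\<lambda>k. \<rho> (Suc k) = \<beta> * \<rho> k) sequentially"
    unfolding frequently_def eventually_sequentially_Suc[of "\<lambda>k. \<rho> (Suc k) \<noteq> \<beta> * \<rho> k"] .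
  moreover have "\<rho> (Suc k) = \<rho> k \<or> \<rho> (Suc k) = \<beta> * \<rho> k" for k using update[of k] by auto
  ultimately show ?thesis using penalty_tendsto_at_top[of \<rho> \<beta>] assms(1,2) by blast
qed

lemma bounded_scaleR_inverse_tendsto_zero:
  fixes u :: "nat \<Rightarrow> 'a::real_normed_vector" and \<rho> :: "nat \<Rightarrow> real"
  assumes "bounded (range u)" and "filterlim \<rho> at_top sequentially"
  shows "(\<lambda>k. (1 / \<rho> k) *\<^sub>R u k) \<longlonglongrightarrow> 0"
proof -
  obtain B where B: "\<And>k. norm (u k) \<le> B" using assms(1) unfolding bounded_iff by blast
  have "(\<lambda>k. B * inverse (\<rho> k)) \<longlonglongrightarrow> 0"
    by (intro tendsto_mult_right_zero tendsto_inverse_0_at_top assms(2))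
  moreover have "eventually (\<lambda>k. norm ((1 / \<rho> k) *\<^sub>R u k) \<le> B * inverse (\<rho> k)) sequentially"
    using filterlim_at_top_dense[THEN iffD1, OF assms(2), rule_format, of 0]
  proof (rule eventually_mono)
    fix k assume "0 < \<rho> k"
    then show "norm ((1 / \<rho> k) *\<^sub>R u k) \<le> B * inverse (\<rho> k)"
      using B[of k] by (simp add: divide_inverse mult.commute mult_left_mono)
  qed
  ultimately show ?thesis by (rule Lim_null_comparison[rotated])
qed

lemma projection_residual_tendsto_zero:
  fixes C :: "'y::euclidean_space set"
  assumes "convex C" and "closed C" and "y \<in> C" and ys: "ys \<longlonglongrightarrow> y" and vs: "vs \<longlonglongrightarrow> 0"
  shows "(\<lambda>j. ys j - closest_point C (ys j + vs j)) \<longlonglongrightarrow> 0"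
proof -
  have "(\<lambda>j. closest_point C (ys j + vs j)) \<longlonglongrightarrow> closest_point C (y + 0)"
    using assms
    by (intro continuous_on_tendsto_compose[OF continuous_on_closest_point[where t=UNIV]] tendsto_add)
      auto
  then have "(\<lambda>j. ys j - closest_point C (ys j + vs j)) \<longlonglongrightarrow> y - closest_point C y"
    using ys by (intro tendsto_diff) simp_all
  then show ?thesis using closest_point_self[OF \<open>y \<in> C\<close>] by simp
qed

lemma subseq_predecessor:
  assumes "strict_mono r" and "(x \<circ> r) \<longlonglongrightarrow> l"
  obtains s where "strict_mono s" and "(\<lambda>j. x (Suc (s j))) \<longlonglongrightarrow> l"
proof
  define s where "s j = r (Suc j) - 1" for j
  have s_Suc: "Suc (s j) = r (Suc j)" for j
    using seq_suble[OF assms(1), of "Suc j"] by (simp add: s_def)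
  show "strict_mono s"
    unfolding strict_mono_Suc_iff using strict_monoD[OF assms(1)] s_Suc
    by (metis Suc_less_SucD lessI)
  show "(\<lambda>j. x (Suc (s j))) \<longlonglongrightarrow> l"
    using LIMSEQ_Suc[OF assms(2)] by (simp add: s_Suc comp_def)
qed

lemma projection_residual_subseq_tendsto_zero:
  fixes G :: "'w::topological_space \<Rightarrow> 'y::euclidean_space"
  assumes "convex C" and "closed C" and "continuous_on UNIV G" and "G wb \<in> C"
    and "bounded (range u)" and s: "strict_mono s" and xs: "(\<lambda>j. x (s j)) \<longlonglongrightarrow> wb"
    and "(\<lambda>k. norm (G (x k) - closest_point C (G (x k) + (1 / \<rho> k) *\<^sub>R u k))) \<longlonglongrightarrow> 0
         \<or> filterlim \<rho> at_top sequentially"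
  shows "(\<lambda>j. G (x (s j)) - closest_point C (G (x (s j)) + (1 / \<rho> (s j)) *\<^sub>R u (s j))) \<longlonglongrightarrow> 0"
  using assms(8)
proof
  assume "(\<lambda>k. norm (G (x k) - closest_point C (G (x k) + (1 / \<rho> k) *\<^sub>R u k))) \<longlonglongrightarrow> 0"
  then show ?thesis using LIMSEQ_subseq_LIMSEQ[OF _ s] by (simp add: tendsto_norm_zero_iff comp_def)
next
  assume "filterlim \<rho> at_top sequentially"
  with \<open>bounded (range u)\<close> have "(\<lambda>k. (1 / \<rho> k) *\<^sub>R u k) \<longlonglongrightarrow> 0"
    by (rule bounded_scaleR_inverse_tendsto_zero)
  then have "(\<lambda>j. (1 / \<rho> (s j)) *\<^sub>R u (s j)) \<longlonglongrightarrow> 0"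
    using LIMSEQ_subseq_LIMSEQ[OF _ s] by (simp add: comp_def)
  moreover from continuous_on_tendsto_compose[OF \<open>continuous_on UNIV G\<close> xs]
  have "(\<lambda>j. G (x (s j))) \<longlonglongrightarrow> G wb" by simp
  ultimately show ?thesis
    by (rule projection_residual_tendsto_zero[OF assms(1,2,4), rotated])
qed

lemma M_stationary_of_neg_gradient_in_AM_map:
  assumes "- Df wb \<in> AM_map G DG C D wb 0"
  shows "\<exists>l. 0 \<in> (\<lambda>v. Df wb + adjoint (blinfun_apply (DG wb)) l + v) ` lim_normal_cone D wb
             \<and> l \<in> normal_cone_cvx C (G wb)"
proof -
  obtain l v where "- Df wb = adjoint (blinfun_apply (DG wb)) l + v"
      and "l \<in> normal_cone_cvx C (G wb)" and "v \<in> lim_normal_cone D wb"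
    using assms unfolding AM_map_def by auto
  then show ?thesis
    by (intro exI[of _ l]) (auto simp: image_iff add.assoc intro!: bexI[of _ v] dest: sym)
qed

theorem mainTheorem10:
  fixes f :: "'w::euclidean_space \<Rightarrow> real"
    and Df :: "'w \<Rightarrow> 'w"
    and G :: "'w \<Rightarrow> 'y::euclidean_space"
    and DG :: "'w \<Rightarrow> 'w \<Rightarrow>\<^sub>L 'y"
    and C :: "'y set" and D :: "'w set"
    and \<rho>0 \<beta> \<eta> :: real and U :: "'y set"
    and w eps :: "nat \<Rightarrow> 'w" and u lam :: "nat \<Rightarrow> 'y" and \<rho> :: "nat \<Rightarrow> real"
    and wb :: 'w
  assumes f_deriv: "\<And>x. (f has_derivative (\<lambda>h. inner (Df x) h)) (at x)"
    and Df_cont: "continuous_on UNIV Df"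
    and G_deriv: "\<And>x. (G has_derivative blinfun_apply (DG x)) (at x)"
    and DG_cont: "continuous_on UNIV DG"
    and C_ne: "C \<noteq> {}" and C_closed: "closed C" and C_convex: "convex C"
    and D_ne: "D \<noteq> {}" and D_closed: "closed D"
    and rho0_pos: "\<rho>0 > 0" and beta_gt: "\<beta> > 1" and eta_pos: "0 < \<eta>" and eta_lt: "\<eta> < 1"
    and w0: "w 0 \<in> D"
    and U_ne: "U \<noteq> {}" and U_bdd: "bounded U"
    and rho_init: "\<rho> 0 = \<rho>0"
    and u_in: "\<And>k. u k \<in> U"
    and eps_step: "\<And>k. \<exists>g. ((\<lambda>x. aug_lag f G C (\<rho> k) x (u k)) has_derivative (\<lambda>h. inner g h)) (at (w (Suc k)))
                       \<and> eps (Suc k) \<in> (\<lambda>v. g + v) ` lim_normal_cone D (w (Suc k))"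
    and lam_def: "\<And>k. lam (Suc k) = \<rho> k *\<^sub>R (G (w (Suc k)) + (1 / \<rho> k) *\<^sub>R u k
                      - closest_point C (G (w (Suc k)) + (1 / \<rho> k) *\<^sub>R u k))"
    and rho_update: "\<And>k. \<rho> (Suc k) =
          (if k = 0 \<or> V_fun G C (\<rho> k) (w (Suc k)) (u k) \<le> \<eta> * V_fun G C (\<rho> (k - 1)) (w k) (u (k - 1))
           then \<rho> k else \<beta> * \<rho> k)"
    and eps_lim: "eps \<longlonglongrightarrow> 0"
    and accum: "\<exists>r. strict_mono r \<and> (w \<circ> r) \<longlonglongrightarrow> wb"
    and feas: "G wb \<in> C" "wb \<in> D"
    and AMreg: "AM_regular G DG C D wb"
  shows "\<exists>l. 0 \<in> (\<lambda>v. Df wb + adjoint (blinfun_apply (DG wb)) l + v) ` lim_normal_cone D wb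
             \<and> l \<in> normal_cone_cvx C (G wb)"
proof -
  define z where "z k = G (w (Suc k)) - closest_point C (G (w (Suc k)) + (1 / \<rho> k) *\<^sub>R u k)" for k
  have "\<rho> (Suc k) = \<rho> k \<or> \<rho> (Suc k) = \<beta> * \<rho> k" for k using rho_update[of k] by auto
  then have rho_pos: "\<rho> k > 0" for k using penalty_pos[of \<rho> \<beta>] rho_init rho0_pos beta_gt by simp
  have in_AM_map: "eps (Suc k) - Df (w (Suc k)) \<in> AM_map G DG C D (w (Suc k)) (z k)" for k
    using eps_step[of k] approx_stationary_in_AM_map[where Df=Df and DG=DG and x="w (Suc k)",
          OF f_deriv G_deriv C_convex C_closed C_ne rho_pos]
    unfolding z_def by blast
  obtain s where s: "strict_mono s" and ws: "(\<lambda>j. w (Suc (s j))) \<longlonglongrightarrow> wb"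
    using accum subseq_predecessor by blast
  have "(\<lambda>k. norm (z k)) \<longlonglongrightarrow> 0 \<or> filterlim \<rho> at_top sequentially"
  proof (rule safeguarded_penalty_dichotomy[of \<rho> \<beta> \<eta>])
    show "\<rho> (Suc k) = (if k = 0 \<or> norm (z k) \<le> \<eta> * norm (z (k - 1)) then \<rho> k else \<beta> * \<rho> k)" for k
      using rho_update[of k] by (cases k) (simp_all add: z_def V_fun_def)
  qed (use rho_init rho0_pos beta_gt eta_pos eta_lt in auto)
  moreover have "continuous_on UNIV G"
    using G_deriv by (meson continuous_at_imp_continuous_on has_derivative_continuous)
  moreover have "bounded (range u)" using bounded_subset[OF U_bdd] u_in by blast
  ultimately have z_lim: "(\<lambda>j. z (s j)) \<longlonglongrightarrow> 0"
    unfolding z_def using ws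
    by (intro projection_residual_subseq_tendsto_zero[where G=G and wb=wb and x="\<lambda>k. w (Suc k)",
          OF C_convex C_closed _ feas(1) _ s]) simp_all
  have "(\<lambda>j. eps (Suc (s j)) - Df (w (Suc (s j)))) \<longlonglongrightarrow> 0 - Df wb"
    using LIMSEQ_subseq_LIMSEQ[OF LIMSEQ_Suc[OF eps_lim] s]
      continuous_on_tendsto_compose[OF Df_cont ws]
    by (intro tendsto_diff) (simp_all add: comp_def)
  then have "- Df wb \<in> AM_map G DG C D wb 0"
    using AMreg in_AM_map ws z_lim unfolding AM_regular_def by fastforce
  then show ?thesis by (rule M_stationary_of_neg_gradient_in_AM_map)
qed

end
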